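(* Let $d\geq 0$ and $0<i\leq d+1$ be integers such that $i$ divides $d+1$. Let $\Delta\in\mathcal{C}(i,d)$ with $f_j(\Delta)=f_j(S(i,d))$ for every $j$. Then $\Delta$ is isomorphic to $S(i,d)$.
   Context: All simplicial complexes are finite abstract simplicial complexes; $f_j(\Delta)$ denotes the number of $j$-dimensional faces of $\Delta$. A set $F$ of vertices is a missing face of $\Delta$ if $F\notin\Delta$ but every proper subset of $F$ is in $\Delta$; its dimension is $|F|-1$. $\mathcal{C}(i,d)$ denotes the family of $d$-dimensional simplicial complexes $\Delta$ with $\tilde H_d(\Delta;\mathbb{Z})\neq 0$ (reduced homology) and with no missing faces of dimension $>i$. For integers $d\geq 0$, $i>0$ with $d+1=qi+r$ ($q\geq 0$, $1\leq r\leq i$), $S(i,d)$ is the simplicial join of $q$ copies of $\partial\sigma^i$ and one copy of $\partial\sigma^r$ on pairwise disjoint vertex sets, where $\partial\sigma^k$ is the boundary complex of the $k$-simplex. *)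

theory Defs
  imports Main
begin

text \<open>Finite abstract simplicial complexes: finite families of finite vertex sets,
  closed under taking subsets (so the empty face, of dimension -1, belongs to every
  nonempty complex).\<close>

definition simplicial_complex :: "'a set set \<Rightarrow> bool" where
  "simplicial_complex K \<longleftrightarrow> finite K \<and> K \<noteq> {} \<and> (\<forall>F\<in>K. finite F) \<and>
     (\<forall>F\<in>K. \<forall>G. G \<subseteq> F \<longrightarrow> G \<in> K)"

definition vertices :: "'a set set \<Rightarrow> 'a set" where
  "vertices K = \<Union>K"

definition has_dim :: "'a set set \<Rightarrow> nat \<Rightarrow> bool" where
  "has_dim K d \<longleftrightarrow> (\<exists>F\<in>K. card F = d + 1) \<and> (\<forall>F\<in>K. card F \<le> d + 1)"

definition fvec :: "nat \<Rightarrow> 'a set set \<Rightarrow> nat" where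
  "fvec j K = card {F\<in>K. card F = j + 1}"

definition missing_face :: "'a set set \<Rightarrow> 'a set \<Rightarrow> bool" where
  "missing_face K F \<longleftrightarrow> finite F \<and> F \<notin> K \<and> (\<forall>G. G \<subset> F \<longrightarrow> G \<in> K)"

text \<open>Simplicial (augmented) boundary map with integer coefficients, orientation induced by
  the linear order on vertices: the boundary of the oriented simplex [x_0 < ... < x_k] is
  the sum over l of (-1)^l [.. omitting x_l ..]. For G a (k-1)-face, the coefficient of F
  in the boundary is nonzero only if G is F minus one vertex x, and then equals
  (-1)^(number of vertices of F below x).\<close>
definition bd_sign :: "'a::linorder set \<Rightarrow> 'a set \<Rightarrow> int" where
  "bd_sign F G = (-1) ^ card {y\<in>F. y < the_elem (F - G)}"

definition boundary :: "'a::linorder set set \<Rightarrow> nat \<Rightarrow> ('a set \<Rightarrow> int) \<Rightarrow> 'a set \<Rightarrow> int" where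
  "boundary K k c G = (\<Sum>F\<in>{F\<in>K. card F = k + 1 \<and> G \<subseteq> F}. bd_sign F G * c F)"

definition chain :: "'a set set \<Rightarrow> nat \<Rightarrow> ('a set \<Rightarrow> int) \<Rightarrow> bool" where
  "chain K k c \<longleftrightarrow> (\<forall>F. c F \<noteq> 0 \<longrightarrow> F \<in> K \<and> card F = k + 1)"

text \<open>For a d-dimensional complex there are no (d+1)-chains, so the reduced homology
  group H~_d(K;Z) is the kernel of the (augmented, for d = 0) boundary map on d-chains.\<close>
definition top_reduced_homology_nonzero :: "'a::linorder set set \<Rightarrow> nat \<Rightarrow> bool" where
  "top_reduced_homology_nonzero K d \<longleftrightarrow>
     (\<exists>c. chain K d c \<and> (\<exists>F. c F \<noteq> 0) \<and>
          (\<forall>G\<in>K. card G = d \<longrightarrow> boundary K d c G = 0))"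

definition C_class :: "nat \<Rightarrow> nat \<Rightarrow> 'a::linorder set set set" where
  "C_class i d = {K. simplicial_complex K \<and> has_dim K d \<and> top_reduced_homology_nonzero K d \<and>
       (\<forall>F. missing_face K F \<longrightarrow> card F - 1 \<le> i)}"

definition bd_simplex :: "'a set \<Rightarrow> 'a set set" where
  "bd_simplex V = {F. F \<subset> V}"

definition join :: "'a set set \<Rightarrow> 'a set set \<Rightarrow> 'a set set" where
  "join K L = {F \<union> G | F G. F \<in> K \<and> G \<in> L}"

text \<open>S(i,d): with d+1 = q*i + r, 1 \<le> r \<le> i (so q = d div i, r = d mod i + 1), the join
  of q copies of the boundary of the i-simplex and one copy of the boundary of the
  r-simplex, on pairwise disjoint vertex sets of natural numbers.\<close>
definition S_complex :: "nat \<Rightarrow> nat \<Rightarrow> nat set set" where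
  "S_complex i d =
    (let q = d div i; r = d mod i + 1 in
     foldr join (map (\<lambda>k. bd_simplex {k * (i + 1) ..< (k + 1) * (i + 1)}) [0..<q])
       (bd_simplex {q * (i + 1) ..< q * (i + 1) + r + 1}))"

definition isomorphic :: "'a set set \<Rightarrow> 'b set set \<Rightarrow> bool" where
  "isomorphic K L \<longleftrightarrow> (\<exists>f. bij_betw f (vertices K) (vertices L) \<and> (`) f ` K = L)"

end

theory Submission
  imports Defs
begin

(* Write d + 1 = n * i.  Then S(i,d) is the join of n boundaries of
   i-simplices, i.e. the complex of all subsets of the n(i+1) vertices that contain
   no complete block of a partition into n blocks of size i+1 ("block complex").
   For Delta in C(i,d) with the f-vector of S(i,d) we record four properties:
   Delta is closed under subsets, its faces have at most n*i vertices, it has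
   n(i+1) vertices (f_0), every non-face contains a non-face with at most i+1
   vertices (no large missing faces), and the support of a nonzero top cycle is a
   nonempty family of (n*i)-faces in which every ridge of a member lies in a second
   member (the boundary vanishes).  The core of the file shows by induction on n
   that every complex with these properties ("admissible") is a block complex: the
   link of a suitable i-subset A of a support face is admissible for n - 1, hence a
   block complex, and one more link shows that the missing vertex w together with A
   forms the remaining block. *)

section \<open>Block complexes\<close>

definition down_closed :: "'a set set \<Rightarrow> bool" where
  "down_closed K \<longleftrightarrow> (\<forall>F\<in>K. \<forall>G. G \<subseteq> F \<longrightarrow> G \<in> K)"

lemma down_closedD: "down_closed K \<Longrightarrow> F \<in> K \<Longrightarrow> G \<subseteq> F \<Longrightarrow> G \<in> K"
  unfolding down_closed_def by blast

definition block_partition :: "'a set set \<Rightarrow> nat \<Rightarrow> nat \<Rightarrow> bool" where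
  "block_partition P n i \<longleftrightarrow> finite P \<and> card P = n \<and> (\<forall>B\<in>P. finite B \<and> card B = Suc i) \<and>
     (\<forall>B\<in>P. \<forall>C\<in>P. B \<noteq> C \<longrightarrow> B \<inter> C = {})"

text \<open>The join of the boundaries of the simplices spanned by the blocks of P: all vertex
  sets that contain no complete block.\<close>
definition block_complex :: "'a set set \<Rightarrow> 'a set set" where
  "block_complex P = {G. G \<subseteq> \<Union>P \<and> (\<forall>B\<in>P. \<not> B \<subseteq> G)}"

lemma down_closed_block_complex: "down_closed (block_complex P)"
  by (auto simp: down_closed_def block_complex_def)

lemma block_partition_card:
  assumes "block_partition P n i"
  shows "card (\<Union>P) = n * Suc i" and "finite (\<Union>P)"
proof -
  have disj: "pairwise disjnt P"
    using assms unfolding block_partition_def pairwise_def disjnt_def by blast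
  have "card (\<Union>P) = sum card P"
    by (rule card_Union_disjoint[OF disj]) (use assms in \<open>auto simp: block_partition_def\<close>)
  also have "\<dots> = sum (\<lambda>_. Suc i) P" using assms by (auto simp: block_partition_def intro: sum.cong)
  also have "\<dots> = n * Suc i" using assms by (simp add: block_partition_def)
  finally show "card (\<Union>P) = n * Suc i" .
  show "finite (\<Union>P)" using assms by (auto simp: block_partition_def)
qed

text \<open>Blocks have at least two vertices, so every vertex of the partition is a vertex of
  the block complex.\<close>
lemma vertices_block_complex:
  assumes "block_partition P n i" and "0 < i"
  shows "\<Union>(block_complex P) = \<Union>P"
proof
  show "\<Union>(block_complex P) \<subseteq> \<Union>P" by (auto simp: block_complex_def)
  show "\<Union>P \<subseteq> \<Union>(block_complex P)"
  proof
    fix x assume x: "x \<in> \<Union>P"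
    have "\<not> B \<subseteq> {x}" if "B \<in> P" for B
    proof
      assume "B \<subseteq> {x}"
      then have "card B \<le> 1" using card_mono[of "{x}" B] by simp
      with that assms show False by (auto simp: block_partition_def)
    qed
    with x have "{x} \<in> block_complex P" by (auto simp: block_complex_def)
    then show "x \<in> \<Union>(block_complex P)" by blast
  qed
qed

lemma block_complexI:
  assumes "down_closed K" and "G \<in> K" and "G \<subseteq> \<Union>Q" and "\<forall>C\<in>Q. C \<notin> K"
  shows "G \<in> block_complex Q"
  using assms down_closedD[OF assms(1,2)] by (auto simp: block_complex_def)

lemma block_partition_insert:
  assumes Q: "block_partition Q m i" and B: "finite B" "card B = Suc i" and disj: "B \<inter> \<Union>Q = {}"
  shows "block_partition (insert B Q) (Suc m) i"
proof -
  have "B \<notin> Q"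
  proof
    assume "B \<in> Q"
    then have "B = {}" using disj by blast
    then show False using B by simp
  qed
  then show ?thesis using Q B disj unfolding block_partition_def by auto
qed

section \<open>Links and admissible complexes\<close>

definition link :: "'a set set \<Rightarrow> 'a set \<Rightarrow> 'a set set" where
  "link K A = {G. G \<inter> A = {} \<and> G \<union> A \<in> K}"

text \<open>No large missing faces: every finite non-face contains a non-face with at most
  i+1 vertices.\<close>
definition small_nonfaces :: "'a set set \<Rightarrow> nat \<Rightarrow> bool" where
  "small_nonfaces K i \<longleftrightarrow>
     (\<forall>X. finite X \<longrightarrow> X \<notin> K \<longrightarrow> (\<exists>M\<subseteq>X. M \<notin> K \<and> card M \<le> Suc i))"

lemma small_nonfacesD:
  "small_nonfaces K i \<Longrightarrow> finite X \<Longrightarrow> X \<notin> K \<Longrightarrow> \<exists>M\<subseteq>X. M \<notin> K \<and> card M \<le> Suc i"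
  unfolding small_nonfaces_def by blast

text \<open>The combinatorial shadow of a top-dimensional cycle: a nonempty family of faces in
  which, for every member F and vertex a of F, the ridge F - {a} lies in another member.\<close>
definition pseudocycle :: "'a set set \<Rightarrow> bool" where
  "pseudocycle Fs \<longleftrightarrow> Fs \<noteq> {} \<and> (\<forall>F\<in>Fs. \<forall>a\<in>F. \<exists>w. w \<notin> F \<and> insert w (F - {a}) \<in> Fs)"

definition admissible :: "'a set set \<Rightarrow> 'a set set \<Rightarrow> nat \<Rightarrow> nat \<Rightarrow> bool" where
  "admissible K Fs i n \<longleftrightarrow> down_closed K \<and> (\<forall>F\<in>K. finite F \<and> card F \<le> n * i) \<and>
     finite (\<Union>K) \<and> card (\<Union>K) \<le> n * Suc i \<and> small_nonfaces K i \<and>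
     Fs \<subseteq> K \<and> (\<forall>F\<in>Fs. card F = n * i) \<and> pseudocycle Fs"

lemma down_closed_link: "down_closed K \<Longrightarrow> down_closed (link K A)"
  unfolding down_closed_def link_def
proof (intro ballI allI impI)
  fix F G assume K: "\<forall>F\<in>K. \<forall>G. G \<subseteq> F \<longrightarrow> G \<in> K"
    and F: "F \<in> {G. G \<inter> A = {} \<and> G \<union> A \<in> K}" and "G \<subseteq> F"
  then have "G \<inter> A = {}" "G \<union> A \<subseteq> F \<union> A" "F \<union> A \<in> K" by auto
  then show "G \<in> {G. G \<inter> A = {} \<and> G \<union> A \<in> K}" using K by blast
qed

text \<open>A non-face X of the link gives the non-face X \<union> A of K; a small non-face inside it
  minus A is a small non-face of the link.\<close>
lemma small_nonfaces_link:
  assumes K: "down_closed K" "small_nonfaces K i" and A: "finite A"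
  shows "small_nonfaces (link K A) i"
  unfolding small_nonfaces_def
proof (intro allI impI)
  fix X assume fX: "finite X" and X: "X \<notin> link K A"
  show "\<exists>M\<subseteq>X. M \<notin> link K A \<and> card M \<le> Suc i"
  proof (cases "X \<inter> A = {}")
    case False
    then obtain y where "y \<in> X" "y \<in> A" by auto
    then show ?thesis by (intro exI[of _ "{y}"]) (auto simp: link_def)
  next
    case True
    then have "X \<union> A \<notin> K" using X by (simp add: link_def)
    then obtain M where M: "M \<subseteq> X \<union> A" "M \<notin> K" "card M \<le> Suc i"
      using small_nonfacesD[OF K(2) finite_UnI[OF fX A]] by blast
    have fM: "finite M" using M(1) fX A finite_subset by blast
    have "M - A \<notin> link K A"
    proof
      assume "M - A \<in> link K A"
      then have "(M - A) \<union> A \<in> K" by (simp add: link_def)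
      moreover have "M \<subseteq> (M - A) \<union> A" by blast
      ultimately have "M \<in> K" by (rule down_closedD[OF K(1)])
      with M show False by simp
    qed
    moreover have "card (M - A) \<le> Suc i"
      using card_mono[OF fM, of "M - A"] M(3) by simp
    moreover have "M - A \<subseteq> X" using M(1) by blast
    ultimately show ?thesis by blast
  qed
qed

lemma card_link_face:
  assumes "G \<in> link K A" and "\<forall>F\<in>K. finite F \<and> card F \<le> Suc m * i"
    and "finite A" "card A = i"
  shows "finite G" and "card G \<le> m * i"
proof -
  have G: "G \<inter> A = {}" "G \<union> A \<in> K" using assms(1) by (auto simp: link_def)
  then have fGA: "finite (G \<union> A)" "card (G \<union> A) \<le> Suc m * i" using assms(2) by auto
  then show fG: "finite G" by auto
  have "card (G \<union> A) = card G + i" using card_Un_disjoint[OF fG assms(3) G(1)] assms(4) by simp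
  then show "card G \<le> m * i" using fGA by simp
qed

lemma vertices_link:
  assumes "down_closed K" and "insert x A \<notin> K"
  shows "\<Union>(link K A) \<subseteq> \<Union>K - insert x A"
proof
  fix y assume "y \<in> \<Union>(link K A)"
  then obtain G where G: "y \<in> G" "G \<inter> A = {}" "G \<union> A \<in> K" by (auto simp: link_def)
  then have "insert y A \<in> K" using down_closedD[OF assms(1) G(3)] by blast
  then show "y \<in> \<Union>K - insert x A" using G assms(2) by auto
qed

lemma pseudocycle_link:
  assumes Fs: "pseudocycle Fs" and F0: "F0 \<in> Fs" "A \<subseteq> F0"
  shows "pseudocycle ((\<lambda>F. F - A) ` {F\<in>Fs. A \<subseteq> F})"
  unfolding pseudocycle_def
proof (intro conjI ballI)
  show "(\<lambda>F. F - A) ` {F\<in>Fs. A \<subseteq> F} \<noteq> {}" using F0 by auto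
next
  fix G a assume "G \<in> (\<lambda>F. F - A) ` {F\<in>Fs. A \<subseteq> F}" "a \<in> G"
  then obtain F where F: "F \<in> Fs" "A \<subseteq> F" "G = F - A" "a \<in> F" "a \<notin> A" by auto
  then obtain w where w: "w \<notin> F" "insert w (F - {a}) \<in> Fs"
    using Fs unfolding pseudocycle_def by blast
  have "A \<subseteq> insert w (F - {a})" using F by auto
  moreover have "insert w (G - {a}) = insert w (F - {a}) - A" using F w by auto
  ultimately show "\<exists>w. w \<notin> G \<and> insert w (G - {a}) \<in> (\<lambda>F. F - A) ` {F\<in>Fs. A \<subseteq> F}"
    using w F by (intro exI[of _ w]) auto
qed

lemma admissible_link:
  assumes K: "admissible K Fs i (Suc m)" and F0: "F0 \<in> Fs" "A \<subseteq> F0" and A: "card A = i"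
    and x: "x \<in> \<Union>K" "x \<notin> A" "insert x A \<notin> K"
  shows "admissible (link K A) ((\<lambda>F. F - A) ` {F\<in>Fs. A \<subseteq> F}) i m"
proof -
  have dc: "down_closed K" and dim: "\<forall>F\<in>K. finite F \<and> card F \<le> Suc m * i"
    and fU: "finite (\<Union>K)" and cU: "card (\<Union>K) \<le> Suc m * Suc i"
    and FsK: "Fs \<subseteq> K" and cFs: "\<forall>F\<in>Fs. card F = Suc m * i"
    using K by (auto simp: admissible_def)
  have F0K: "F0 \<in> K" using F0 FsK by auto
  have fA: "finite A" using dim F0K F0 finite_subset by blast
  have sub: "\<Union>(link K A) \<subseteq> \<Union>K - insert x A" using vertices_link[OF dc x(3)] .
  have "card (\<Union>(link K A)) \<le> card (\<Union>K - insert x A)" using sub fU by (intro card_mono) auto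
  also have "\<dots> = card (\<Union>K) - Suc i"
    using x F0K F0 fA A by (subst card_Diff_subset) auto
  finally have cL: "card (\<Union>(link K A)) \<le> m * Suc i" using cU by simp
  have FsL: "(\<lambda>F. F - A) ` {F\<in>Fs. A \<subseteq> F} \<subseteq> link K A"
    using FsK by (auto simp: link_def Un_absorb2)
  have cFsL: "card (F - A) = m * i" if "F \<in> Fs" "A \<subseteq> F" for F
    using that cFs A dim FsK card_Diff_subset[OF fA] by auto
  have smL: "small_nonfaces (link K A) i"
    using small_nonfaces_link[OF dc _ fA] K by (simp add: admissible_def)
  have psL: "pseudocycle ((\<lambda>F. F - A) ` {F\<in>Fs. A \<subseteq> F})"
    using pseudocycle_link[OF _ F0] K by (simp add: admissible_def)
  have dimL: "\<forall>G\<in>link K A. finite G \<and> card G \<le> m * i"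
    using card_link_face[OF _ dim fA A] by blast
  have fL: "finite (\<Union>(link K A))" using sub fU finite_subset by blast
  show ?thesis unfolding admissible_def
    using down_closed_link[OF dc] dimL fL cL smL FsL cFsL psL by blast
qed

section \<open>The structure theorem for admissible complexes\<close>

lemma link_block_complex_faces:
  assumes dc: "down_closed K" and L: "link K A = block_complex Q"
    and M: "M \<subseteq> A \<union> \<Union>Q" "\<forall>C\<in>Q. \<not> C \<subseteq> M"
  shows "M \<in> K"
proof -
  have "M \<inter> \<Union>Q \<in> block_complex Q" using M(2) by (auto simp: block_complex_def)
  then have "M \<inter> \<Union>Q \<in> link K A" using L by simp
  then have "(M \<inter> \<Union>Q) \<union> A \<in> K" by (simp add: link_def)
  moreover have "M \<subseteq> (M \<inter> \<Union>Q) \<union> A" using M(1) by blast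
  ultimately show ?thesis by (rule down_closedD[OF dc])
qed

text \<open>Let the link of an i-face A be the block complex of Q, and G a maximal face of the
  link.  Then no block C of Q is a face of K: otherwise A \<union> C \<union> G would be a non-face
  too large for K, and a small non-face inside it could neither contain C (it would
  be C itself) nor miss part of C (it would then contain no block of Q at all).\<close>
lemma block_nonface:
  assumes dc: "down_closed K" and dim: "\<forall>F\<in>K. finite F \<and> card F \<le> Suc m * i"
    and sn: "small_nonfaces K i" and i: "0 < i" and A: "finite A" "card A = i"
    and L: "link K A = block_complex Q" and Q: "block_partition Q m i"
    and G: "G \<in> link K A" "card G = m * i" and C: "C \<in> Q"
  shows "C \<notin> K"
proof
  assume CK: "C \<in> K"
  have UQ: "\<Union>Q = \<Union>(link K A)" using vertices_block_complex[OF Q i] L by simp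
  have UA: "\<Union>Q \<inter> A = {}" unfolding UQ by (auto simp: link_def)
  have GQ: "G \<in> block_complex Q" using G L by simp
  have GU: "G \<subseteq> \<Union>Q" using GQ by (auto simp: block_complex_def)
  have fC: "finite C" "card C = Suc i" using Q C by (auto simp: block_partition_def)
  have fG: "finite G" using GU block_partition_card(2)[OF Q] finite_subset by blast
  obtain y where y: "y \<in> C" "y \<notin> G" using GQ C by (auto simp: block_complex_def)
  have "card (insert y G) \<le> card (C \<union> G)" using y fC fG by (intro card_mono) auto
  then have cCG: "m * i + 1 \<le> card (C \<union> G)" using y fG G by simp
  let ?H = "A \<union> (C \<union> G)"
  have fH: "finite ?H" using A fC fG by simp
  have "A \<inter> (C \<union> G) = {}" using UA C G(1) by (auto simp: link_def)
  then have "card ?H = card A + card (C \<union> G)" using A fC fG by (intro card_Un_disjoint) auto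
  then have "Suc m * i < card ?H" using cCG A by simp
  then have "?H \<notin> K" using dim leD by blast
  then obtain M where M: "M \<subseteq> ?H" "M \<notin> K" "card M \<le> Suc i"
    using small_nonfacesD[OF sn fH] by blast
  have fM: "finite M" using M fH finite_subset by blast
  show False
  proof (cases "C \<subseteq> M")
    case True
    then have "C = M" using card_subset_eq[OF fM True] fC M card_mono[OF fM True] by simp
    then show False using CK M by simp
  next
    case False
    have "\<forall>D\<in>Q. \<not> D \<subseteq> M"
    proof (intro ballI notI)
      fix D assume D: "D \<in> Q" "D \<subseteq> M"
      then have "D \<noteq> C" using False by auto
      then have "D \<inter> C = {}" using Q D(1) C unfolding block_partition_def by blast
      moreover have "D \<inter> A = {}" using UA D(1) by auto
      ultimately have "D \<subseteq> G" using D(2) M(1) by auto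
      then show False using GQ D(1) by (auto simp: block_complex_def)
    qed
    moreover have "M \<subseteq> A \<union> \<Union>Q" using M(1) GU C by auto
    ultimately show False using link_block_complex_faces[OF dc L] M(2) by blast
  qed
qed

text \<open>Starting point of the inductive step: a pseudocycle member F, a vertex w outside F
  and an i-subset A of F such that A + w is a non-face.  It exists because F + w is too
  large to be a face, and a small non-face inside F + w must contain w.\<close>
lemma apex_nonface:
  assumes K: "admissible K Fs i (Suc m)" and i: "0 < i"
  obtains F w A where "F \<in> Fs" "w \<in> \<Union>K" "w \<notin> F" "A \<subseteq> F" "card A = i" "insert w A \<notin> K"
proof -
  have dc: "down_closed K" and dim: "\<forall>F\<in>K. finite F \<and> card F \<le> Suc m * i"
    and sn: "small_nonfaces K i" and FsK: "Fs \<subseteq> K" and cFs: "\<forall>F\<in>Fs. card F = Suc m * i"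
    and ps: "pseudocycle Fs"
    using K by (auto simp: admissible_def)
  obtain F where F: "F \<in> Fs" using ps by (auto simp: pseudocycle_def)
  have FK: "F \<in> K" using F FsK by auto
  have fF: "finite F" and cF: "card F = Suc m * i" using FK dim F cFs by auto
  have "F \<noteq> {}" using cF i by auto
  then obtain a where "a \<in> F" by blast
  then obtain w where w: "w \<notin> F" "insert w (F - {a}) \<in> Fs"
    using ps F by (auto simp: pseudocycle_def)
  have "card (insert w F) = Suc m * i + 1" using w fF cF by simp
  then have "insert w F \<notin> K" using dim by (metis Suc_eq_plus1 not_less_eq_eq le_refl)
  then obtain M where M: "M \<subseteq> insert w F" "M \<notin> K" "card M \<le> Suc i"
    using small_nonfacesD[OF sn finite.insertI[OF fF]] by blast
  have "w \<in> M"
  proof (rule ccontr)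
    assume "w \<notin> M"
    then have "M \<subseteq> F" using M(1) by blast
    then show False using down_closedD[OF dc FK] M(2) by blast
  qed
  moreover have "finite M" using M(1) fF finite_subset by blast
  ultimately have "card (M - {w}) \<le> i" using M(3) by simp
  moreover have "i \<le> card F" using cF by simp
  moreover have "M - {w} \<subseteq> F" using M(1) by blast
  ultimately obtain A where A: "M - {w} \<subseteq> A" "A \<subseteq> F" "card A = i"
    using exists_subset_between[OF _ _ _ fF] by blast
  have "M \<subseteq> insert w A" using A(1) by blast
  then have "insert w A \<notin> K" using M(2) down_closedD[OF dc] by blast
  moreover have "w \<in> \<Union>K" using w FsK by auto
  ultimately show ?thesis using that F w A by blast
qed

lemma link_decomposition:
  fixes K :: "'a set set"
  assumes IH: "\<forall>L Gs :: 'a set set. admissible L Gs i m \<longrightarrow>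
      (\<exists>Q. block_partition Q m i \<and> L = block_complex Q)"
    and K: "admissible K Fs i (Suc m)" and i: "0 < i"
    and F: "F \<in> Fs" "A \<subseteq> F" "card A = i"
    and w: "w \<in> \<Union>K" "w \<notin> A" "insert w A \<notin> K"
  obtains Q where "block_partition Q m i" "link K A = block_complex Q"
    "\<Union>K = insert w A \<union> \<Union>Q" "insert w A \<inter> \<Union>Q = {}" "\<forall>C\<in>Q. C \<notin> K"
proof -
  have dc: "down_closed K" and dim: "\<forall>F\<in>K. finite F \<and> card F \<le> Suc m * i"
    and fU: "finite (\<Union>K)" and cU: "card (\<Union>K) \<le> Suc m * Suc i" and sn: "small_nonfaces K i"
    and FK: "F \<in> K" and cF: "card F = Suc m * i"
    using K F by (auto simp: admissible_def)
  have fF: "finite F" using FK dim by blast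
  have fA: "finite A" using F(2) fF finite_subset by blast
  obtain Q where Q: "block_partition Q m i" "link K A = block_complex Q"
    using IH admissible_link[OF K F w] by blast
  have UQ: "\<Union>Q = \<Union>(link K A)" using vertices_block_complex[OF Q(1) i] Q(2) by simp
  have disj: "insert w A \<inter> \<Union>Q = {}" and sub: "\<Union>Q \<subseteq> \<Union>K"
    using vertices_link[OF dc w(3)] UQ by auto
  have wA: "insert w A \<subseteq> \<Union>K" using w F(2) FK by auto
  have "card (insert w A \<union> \<Union>Q) = Suc i + m * Suc i"
    using card_Un_disjoint[OF _ block_partition_card(2)[OF Q(1)] disj] fA w F(3)
      block_partition_card(1)[OF Q(1)] by simp
  then have "\<Union>K = insert w A \<union> \<Union>Q"
    using card_seteq[OF fU _ ] wA sub cU by (metis Un_least mult_Suc)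
  moreover have "\<forall>C\<in>Q. C \<notin> K"
  proof
    fix C assume C: "C \<in> Q"
    have "F - A \<in> link K A" using FK F(2) by (auto simp: link_def Un_absorb2)
    moreover have "card (F - A) = m * i" using card_Diff_subset[OF fA F(2)] cF F(3) by simp
    ultimately show "C \<notin> K" using block_nonface[OF dc dim sn i fA F(3) Q(2) Q(1) _ _ C] by blast
  qed
  ultimately show ?thesis using that Q disj by blast
qed

text \<open>In that situation w is the only vertex that can replace a vertex a0 \<in> A in F
  within K: any other vertex w0 would extend the maximal link face F - A inside the
  vertex set of Q, hence complete a block of Q inside a face of K.\<close>
lemma exchange_vertex_is_apex:
  assumes K: "admissible K Fs i (Suc m)"
    and F: "F \<in> Fs" "A \<subseteq> F" "card A = i"
    and Q: "link K A = block_complex Q" "\<Union>K = insert w A \<union> \<Union>Q" "\<forall>C\<in>Q. C \<notin> K"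
    and w0: "a0 \<in> A" "w0 \<notin> F" "insert w0 (F - {a0}) \<in> K"
  shows "w0 = w"
proof (rule ccontr)
  assume "w0 \<noteq> w"
  have dc: "down_closed K" and dim: "\<forall>F\<in>K. finite F \<and> card F \<le> Suc m * i"
    and FK: "F \<in> K" and cF: "card F = Suc m * i"
    using K F by (auto simp: admissible_def)
  have fF: "finite F" using FK dim by blast
  have fA: "finite A" using F(2) fF finite_subset by blast
  have w0Q: "w0 \<in> \<Union>Q" using w0 F(2) Q(2) \<open>w0 \<noteq> w\<close> by blast
  have "F - A \<in> link K A" using FK F(2) by (auto simp: link_def Un_absorb2)
  then have FAQ: "F - A \<subseteq> \<Union>Q" using Q(1) by (auto simp: block_complex_def)
  have "card (insert w0 (F - A)) = Suc (m * i)"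
    using card_Diff_subset[OF fA F(2)] cF F(3) fF w0(2) by simp
  then have "insert w0 (F - A) \<notin> link K A" using card_link_face(2)[OF _ dim fA F(3)] by fastforce
  then obtain D where D: "D \<in> Q" "D \<subseteq> insert w0 (F - A)"
    using Q(1) FAQ w0Q by (auto simp: block_complex_def)
  have "insert w0 (F - A) \<subseteq> insert w0 (F - {a0})" using w0(1) by blast
  then have "D \<in> K" using D(2) down_closedD[OF dc w0(3)] by blast
  then show False using Q(3) D(1) by blast
qed

text \<open>Exchanging a0 in F must bring in w, so the
  link of A' = A - {a0} + w is again a block complex on the same vertices; the blocks
  of both partitions are non-faces of K, so G also lies in the link of A'.\<close>
lemma cone_faces:
  fixes K :: "'a set set"
  assumes IH: "\<forall>L Gs :: 'a set set. admissible L Gs i m \<longrightarrow>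
      (\<exists>Q. block_partition Q m i \<and> L = block_complex Q)"
    and K: "admissible K Fs i (Suc m)" and i: "0 < i"
    and F: "F \<in> Fs" "A \<subseteq> F" "card A = i" and w: "w \<notin> A" "insert w A \<notin> K"
    and Q: "link K A = block_complex Q" "\<Union>K = insert w A \<union> \<Union>Q" "insert w A \<inter> \<Union>Q = {}"
      "\<forall>C\<in>Q. C \<notin> K"
    and a0: "a0 \<in> A" and G: "G \<in> block_complex Q"
  shows "insert w (A - {a0}) \<union> G \<in> K"
proof -
  have dc: "down_closed K" and FsK: "Fs \<subseteq> K" and ps: "pseudocycle Fs"
    and dim: "\<forall>F\<in>K. finite F \<and> card F \<le> Suc m * i"
    using K by (auto simp: admissible_def)
  have "F \<in> K" using F(1) FsK by blast
  then have fA: "finite A" using dim finite_subset[OF F(2)] by blast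
  have "a0 \<in> F" using a0 F(2) by blast
  then obtain w0 where w0: "w0 \<notin> F" "insert w0 (F - {a0}) \<in> Fs"
    using ps F(1) unfolding pseudocycle_def by blast
  have "w0 = w" using exchange_vertex_is_apex[OF K F Q(1,2,4) a0 w0(1)] w0(2) FsK by blast
  define A' where "A' = insert w (A - {a0})"
  have "card (A - {a0}) = i - 1" using card_Diff_singleton[OF a0] F(3) by simp
  then have F': "insert w0 (F - {a0}) \<in> Fs" "A' \<subseteq> insert w0 (F - {a0})" "card A' = i"
    using w0(2) \<open>w0 = w\<close> F(2) w(1) fA i by (auto simp: A'_def)
  have swap: "insert a0 A' = insert w A" using a0 by (auto simp: A'_def)
  have a0': "a0 \<in> \<Union>K" "a0 \<notin> A'" "insert a0 A' \<notin> K"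
    using \<open>a0 \<in> F\<close> \<open>F \<in> K\<close> w a0 swap by (auto simp: A'_def)
  obtain Q' where Q': "block_partition Q' m i" "link K A' = block_complex Q'"
      "\<Union>K = insert a0 A' \<union> \<Union>Q'" "insert a0 A' \<inter> \<Union>Q' = {}" "\<forall>C\<in>Q'. C \<notin> K"
    by (rule link_decomposition[OF IH K i F' a0'])
  have "\<Union>Q' = \<Union>K - insert w A" using Q'(4) unfolding Q'(3) swap by blast
  also have "\<dots> = \<Union>Q" using Q(3) unfolding Q(2) by blast
  finally have "\<Union>Q' = \<Union>Q" .
  moreover have "G \<union> A \<in> K" using G Q(1) by (auto simp: link_def)
  then have "G \<in> K" using down_closedD[OF dc _ Un_upper1] by blast
  moreover have "G \<subseteq> \<Union>Q" using G by (auto simp: block_complex_def)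
  ultimately have "G \<in> link K A'" using block_complexI[OF dc _ _ Q'(5)] Q'(2) by simp
  then show ?thesis by (simp add: link_def A'_def Un_commute)
qed

text \<open>Faces of the extended block complex are faces of K: those avoiding w lie over the
  link of A, and those containing w miss some a0 \<in> A and lie over the link of A - a0 + w.\<close>
lemma faces_of_block_extension:
  fixes K :: "'a set set"
  assumes IH: "\<forall>L Gs :: 'a set set. admissible L Gs i m \<longrightarrow>
      (\<exists>Q. block_partition Q m i \<and> L = block_complex Q)"
    and K: "admissible K Fs i (Suc m)" and i: "0 < i"
    and F: "F \<in> Fs" "A \<subseteq> F" "card A = i" and w: "w \<notin> A" "insert w A \<notin> K"
    and Q: "link K A = block_complex Q" "\<Union>K = insert w A \<union> \<Union>Q" "insert w A \<inter> \<Union>Q = {}"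
      "\<forall>C\<in>Q. C \<notin> K"
    and G: "G \<in> block_complex (insert (insert w A) Q)"
  shows "G \<in> K"
proof -
  have dc: "down_closed K" using K by (simp add: admissible_def)
  have GU: "G \<subseteq> insert w A \<union> \<Union>Q" and noblock: "\<forall>B\<in>insert (insert w A) Q. \<not> B \<subseteq> G"
    using G by (auto simp: block_complex_def)
  show ?thesis
  proof (cases "w \<in> G")
    case False
    then have "G \<subseteq> A \<union> \<Union>Q" using GU by blast
    then show ?thesis using link_block_complex_faces[OF dc Q(1)] noblock by blast
  next
    case True
    then obtain a0 where a0: "a0 \<in> A" "a0 \<notin> G" using noblock by auto
    have "G \<inter> \<Union>Q \<in> block_complex Q" using noblock by (auto simp: block_complex_def)
    then have "insert w (A - {a0}) \<union> (G \<inter> \<Union>Q) \<in> K" by (rule cone_faces[OF IH K i F w Q a0(1)])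
    moreover have "G \<subseteq> insert w (A - {a0}) \<union> (G \<inter> \<Union>Q)" using GU a0 by blast
    ultimately show ?thesis by (rule down_closedD[OF dc])
  qed
qed

lemma admissible_0:
  assumes "admissible K Fs i 0"
  shows "K = {{}}"
proof -
  have dc: "down_closed K" and dim: "\<forall>F\<in>K. finite F \<and> card F \<le> 0"
    and "Fs \<subseteq> K" "pseudocycle Fs" using assms by (auto simp: admissible_def)
  then obtain F where "F \<in> K" by (auto simp: pseudocycle_def)
  then have "{} \<in> K" using down_closedD[OF dc] by blast
  moreover have "G = {}" if "G \<in> K" for G using dim that by auto
  ultimately show "K = {{}}" by blast
qed

text \<open>Structure theorem: every admissible complex is a block complex.  In the inductive
  step the block A + w joins the partition of the link of A.\<close>
theorem admissible_block_complex:
  fixes K :: "'a set set"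
  assumes "0 < i" and "admissible K Fs i n"
  shows "\<exists>P. block_partition P n i \<and> K = block_complex P"
  using assms(2)
proof (induction n arbitrary: K Fs)
  case 0
  then have "K = block_complex {}" using admissible_0 by (auto simp: block_complex_def)
  then show ?case by (intro exI[of _ "{}"]) (simp add: block_partition_def)
next
  case (Suc m)
  have IH: "\<forall>L Gs :: 'a set set. admissible L Gs i m \<longrightarrow>
      (\<exists>Q. block_partition Q m i \<and> L = block_complex Q)" using Suc.IH by blast
  have K: "admissible K Fs i (Suc m)" and i: "0 < i" by fact+
  then have dc: "down_closed K" by (simp add: admissible_def)
  obtain F w A where F: "F \<in> Fs" "A \<subseteq> F" "card A = i" and w: "w \<in> \<Union>K" "w \<notin> F" "insert w A \<notin> K"
    using apex_nonface[OF K i] by metis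
  have wA: "w \<notin> A" using w(2) F(2) by blast
  obtain Q where Q: "block_partition Q m i" "link K A = block_complex Q"
    "\<Union>K = insert w A \<union> \<Union>Q" "insert w A \<inter> \<Union>Q = {}" "\<forall>C\<in>Q. C \<notin> K"
    by (rule link_decomposition[OF IH K i F w(1) wA w(3)])
  define P where "P = insert (insert w A) Q"
  have fA: "finite A" using F(3) i card_ge_0_finite by blast
  have P: "block_partition P (Suc m) i"
    unfolding P_def using block_partition_insert[OF Q(1) _ _ Q(4)] fA F(3) wA by simp
  have UP: "\<Union>P = \<Union>K" using Q(3) by (simp add: P_def)
  have noface: "\<forall>C\<in>P. C \<notin> K" using w(3) Q(5) by (simp add: P_def)
  have "G \<in> block_complex P" if "G \<in> K" for G
    using block_complexI[OF dc that _ noface] Union_upper[OF that] UP by simp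
  moreover have "G \<in> K" if "G \<in> block_complex P" for G
    using faces_of_block_extension[OF IH K i F wA w(3) Q(2-5)] that by (simp add: P_def)
  ultimately show ?case using P by blast
qed

section \<open>Complexes in C(i,d) are admissible\<close>

lemma down_closed_simplicial_complex: "simplicial_complex K \<Longrightarrow> down_closed K"
  unfolding simplicial_complex_def down_closed_def by blast

text \<open>Without missing faces of dimension > i, every non-face contains a non-face with at
  most i+1 vertices: a minimal non-face inside it is a missing face.\<close>
lemma small_nonfaces_of_missing_faces:
  assumes "\<forall>F. missing_face K F \<longrightarrow> card F - 1 \<le> i"
  shows "small_nonfaces K i"
  unfolding small_nonfaces_def
proof (intro allI impI)
  fix X assume "finite X" "X \<notin> K"
  then show "\<exists>M\<subseteq>X. M \<notin> K \<and> card M \<le> Suc i"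
  proof (induction "card X" arbitrary: X rule: less_induct)
    case (less X)
    show ?case
    proof (cases "\<forall>G. G \<subset> X \<longrightarrow> G \<in> K")
      case True
      then have "missing_face K X" using less.prems by (simp add: missing_face_def)
      then have "card X - 1 \<le> i" using assms by blast
      then show ?thesis using less.prems by (intro exI[of _ X]) auto
    next
      case False
      then obtain G where G: "G \<subset> X" "G \<notin> K" by blast
      have "finite G" using G(1) less.prems(1) finite_subset by blast
      moreover have "card G < card X" using psubset_card_mono G(1) less.prems(1) by blast
      ultimately obtain M where "M \<subseteq> G" "M \<notin> K" "card M \<le> Suc i" using less.hyps G(2) by blast
      then show ?thesis using G(1) by blast
    qed
  qed
qed

text \<open>The support of a d-cycle is a pseudocycle: if no d-face other than F contained the
  ridge F - {a} in its support, the boundary would have the nonzero coefficient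
  \<plusminus>c(F) at that ridge.\<close>
lemma pseudocycle_cycle_support:
  fixes K :: "'a::linorder set set"
  assumes K: "simplicial_complex K" and c: "chain K d c"
    and cycle: "\<forall>G\<in>K. card G = d \<longrightarrow> boundary K d c G = 0" and nonzero: "\<exists>F. c F \<noteq> 0"
  shows "pseudocycle {F. c F \<noteq> 0}"
  unfolding pseudocycle_def
proof (intro conjI ballI)
  show "{F. c F \<noteq> 0} \<noteq> {}" using nonzero by blast
next
  fix F a assume F: "F \<in> {F. c F \<noteq> 0}" and a: "a \<in> F"
  show "\<exists>w. w \<notin> F \<and> insert w (F - {a}) \<in> {F. c F \<noteq> 0}"
  proof (rule ccontr)
    assume none: "\<not> ?thesis"
    have FK: "F \<in> K" "card F = d + 1" using c F by (auto simp: chain_def)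
    have fin: "finite K" and fF: "finite F" and dc: "down_closed K"
      using K FK down_closed_simplicial_complex by (auto simp: simplicial_complex_def)
    let ?R = "F - {a}"
    have RK: "?R \<in> K" using down_closedD[OF dc FK(1)] by blast
    have cR: "card ?R = d" using FK a fF by simp
    let ?S = "{F'\<in>K. card F' = d + 1 \<and> ?R \<subseteq> F'}"
    have others: "c F' = 0" if F': "F' \<in> ?S - {F}" for F'
    proof -
      have "finite F'" using F' K by (auto simp: simplicial_complex_def)
      then have "card (F' - ?R) = 1" using card_Diff_subset[of ?R F'] F' fF cR by simp
      then obtain x where x: "F' - ?R = {x}" by (auto simp: card_1_singleton_iff)
      then have "F' = insert x ?R" using F' by blast
      moreover have "x \<notin> F" using x F' \<open>F' = insert x ?R\<close> a by auto
      ultimately show "c F' = 0" using none by auto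
    qed
    have "boundary K d c ?R = bd_sign F ?R * c F + (\<Sum>F'\<in>?S - {F}. bd_sign F' ?R * c F')"
      unfolding boundary_def using sum.remove[of ?S F] fin FK by simp
    also have "(\<Sum>F'\<in>?S - {F}. bd_sign F' ?R * c F') = 0" using others by simp
    finally have "boundary K d c ?R = bd_sign F ?R * c F" by simp
    moreover have "bd_sign F ?R \<noteq> 0" by (simp add: bd_sign_def)
    ultimately show False using F cycle RK cR by simp
  qed
qed

lemma fvec_0_vertices:
  assumes "down_closed K"
  shows "fvec 0 K = card (\<Union>K)"
proof -
  have "{F\<in>K. card F = 0 + 1} = (\<lambda>x. {x}) ` \<Union>K"
    using down_closedD[OF assms] by (auto simp: card_1_singleton_iff)
  then have "fvec 0 K = card ((\<lambda>x. {x}) ` \<Union>K)" by (simp add: fvec_def)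
  also have "\<dots> = card (\<Union>K)" by (rule card_image) (auto simp: inj_on_def)
  finally show ?thesis .
qed

section \<open>Isomorphism type of block complexes\<close>

lemma inj_on_image_subset_iff:
  assumes "inj_on f C" and "A \<subseteq> C" and "B \<subseteq> C"
  shows "f ` A \<subseteq> f ` B \<longleftrightarrow> A \<subseteq> B"
proof
  assume image: "f ` A \<subseteq> f ` B"
  show "A \<subseteq> B"
  proof
    fix x assume "x \<in> A"
    then have "f x \<in> f ` B" using image by blast
    then show "x \<in> B" using inj_on_image_mem_iff[OF assms(1) _ assms(3)] \<open>x \<in> A\<close> assms(2) by blast
  qed
qed (rule image_mono)

lemma block_partitions_bij:
  assumes "block_partition P n i" and "block_partition P' n i"
  shows "\<exists>\<phi>. bij_betw \<phi> (\<Union>P) (\<Union>P') \<and> (`) \<phi> ` P = P'"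
proof -
  have "finite P" using assms(1) by (simp add: block_partition_def)
  then show ?thesis using assms
  proof (induction P arbitrary: P' n rule: finite_induct)
    case empty
    then have "P' = {}" by (auto simp: block_partition_def)
    then show ?case by (simp add: bij_betw_def)
  next
    case (insert B0 P)
    obtain n' where n: "n = Suc n'" "card P = n'"
      using insert.prems(1) insert.hyps by (auto simp: block_partition_def)
    then have "card P' = Suc n'" using insert.prems(2) by (simp add: block_partition_def)
    then obtain B where B: "B \<in> P'" by (metis card.empty ex_in_conv nat.distinct(1))
    have "block_partition P n' i" using insert.prems(1) n(2) by (auto simp: block_partition_def)
    moreover have "card (P' - {B}) = n'" using B \<open>card P' = Suc n'\<close> by (simp add: card_Diff_singleton)
    then have "block_partition (P' - {B}) n' i"
      using insert.prems(2) unfolding block_partition_def by blast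
    ultimately have "\<exists>\<phi>'. bij_betw \<phi>' (\<Union>P) (\<Union>(P' - {B})) \<and> (`) \<phi>' ` P = P' - {B}"
      by (rule insert.IH)
    then obtain \<phi>' where \<phi>': "bij_betw \<phi>' (\<Union>P) (\<Union>(P' - {B}))" "(`) \<phi>' ` P = P' - {B}"
      by blast
    have "finite B0" "finite B" "card B0 = card B"
      using insert.prems B by (auto simp: block_partition_def)
    then obtain h where h: "bij_betw h B0 B" using finite_same_card_bij by blast
    have d0: "B0 \<inter> \<Union>P = {}" using insert.prems(1) insert.hyps(2) by (auto simp: block_partition_def)
    have d1: "B \<inter> \<Union>(P' - {B}) = {}" using insert.prems(2) B by (auto simp: block_partition_def)
    define \<phi> where "\<phi> x = (if x \<in> B0 then h x else \<phi>' x)" for x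
    have b1: "bij_betw \<phi> B0 B" using h by (rule bij_betw_cong[THEN iffD1, rotated]) (simp add: \<phi>_def)
    have b2: "bij_betw \<phi> (\<Union>P) (\<Union>(P' - {B}))"
      using \<phi>'(1) d0 by (intro bij_betw_cong[THEN iffD1, OF _ \<phi>'(1)]) (auto simp: \<phi>_def)
    have "\<Union>P' = B \<union> \<Union>(P' - {B})" using B by blast
    then have bij: "bij_betw \<phi> (\<Union>(insert B0 P)) (\<Union>P')" using bij_betw_combine[OF b1 b2 d1] by simp
    have "\<phi> ` C = \<phi>' ` C" if "C \<in> P" for C using that d0 by (auto simp: \<phi>_def)
    then have "(`) \<phi> ` P = P' - {B}" using \<phi>'(2) by (simp cong: image_cong)
    moreover have "\<phi> ` B0 = B" using b1 by (simp add: bij_betw_def)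
    ultimately have "(`) \<phi> ` insert B0 P = P'" using B by (simp add: insert_absorb)
    then show ?case using bij by blast
  qed
qed

lemma image_block_complex:
  assumes bij: "bij_betw \<phi> (\<Union>P) (\<Union>P')" and blocks: "(`) \<phi> ` P = P'"
  shows "(`) \<phi> ` block_complex P = block_complex P'"
proof -
  have inj: "inj_on \<phi> (\<Union>P)" and onto: "\<phi> ` \<Union>P = \<Union>P'" using bij by (auto simp: bij_betw_def)
  have contains_block: "(\<exists>B'\<in>P'. B' \<subseteq> \<phi> ` G) \<longleftrightarrow> (\<exists>B\<in>P. B \<subseteq> G)" if G: "G \<subseteq> \<Union>P" for G
  proof
    assume "\<exists>B'\<in>P'. B' \<subseteq> \<phi> ` G"
    then obtain B where B: "B \<in> P" "\<phi> ` B \<subseteq> \<phi> ` G" using blocks by blast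
    then have "B \<subseteq> G" using inj_on_image_subset_iff[OF inj Union_upper[OF B(1)] G] by simp
    then show "\<exists>B\<in>P. B \<subseteq> G" using B(1) by blast
  next
    assume "\<exists>B\<in>P. B \<subseteq> G"
    then show "\<exists>B'\<in>P'. B' \<subseteq> \<phi> ` G" using blocks by blast
  qed
  show ?thesis
  proof
    show "(`) \<phi> ` block_complex P \<subseteq> block_complex P'"
    proof
      fix X assume "X \<in> (`) \<phi> ` block_complex P"
      then obtain G where G: "G \<subseteq> \<Union>P" "\<forall>B\<in>P. \<not> B \<subseteq> G" "X = \<phi> ` G"
        by (auto simp: block_complex_def)
      have "X \<subseteq> \<Union>P'" using G(1,3) onto by blast
      then show "X \<in> block_complex P'" using contains_block[OF G(1)] G(2,3) by (auto simp: block_complex_def)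
    qed
  next
    show "block_complex P' \<subseteq> (`) \<phi> ` block_complex P"
    proof
      fix X assume X: "X \<in> block_complex P'"
      then have "X \<subseteq> \<phi> ` \<Union>P" using onto by (simp add: block_complex_def)
      then obtain G where G: "G \<subseteq> \<Union>P" "X = \<phi> ` G" by (auto simp: subset_image_iff)
      then have "G \<in> block_complex P" using X contains_block[OF G(1)] by (auto simp: block_complex_def)
      then show "X \<in> (`) \<phi> ` block_complex P" using G(2) by blast
    qed
  qed
qed

lemma isomorphic_block_complexes:
  assumes "block_partition P n i" and "block_partition P' n i" and "0 < i"
  shows "isomorphic (block_complex P) (block_complex P')"
proof -
  obtain \<phi> where \<phi>: "bij_betw \<phi> (\<Union>P) (\<Union>P')" "(`) \<phi> ` P = P'"
    using block_partitions_bij[OF assms(1,2)] by blast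
  then show ?thesis unfolding isomorphic_def vertices_def
    using image_block_complex[OF \<phi>] vertices_block_complex[OF assms(1,3)]
      vertices_block_complex[OF assms(2,3)] by auto
qed

section \<open>S(i,d) as a block complex\<close>

definition standard_block :: "nat \<Rightarrow> nat \<Rightarrow> nat set" where
  "standard_block i k = {k * (i + 1) ..< (k + 1) * (i + 1)}"

lemma mem_standard_block: "x \<in> standard_block i k \<longleftrightarrow> x div (i + 1) = k"
proof
  assume "x \<in> standard_block i k"
  then show "x div (i + 1) = k"
    unfolding standard_block_def by (intro div_nat_eqI) (auto simp: mult.commute)
next
  assume k: "x div (i + 1) = k"
  have "(i + 1) * (x div (i + 1)) \<le> x" by (rule times_div_less_eq_dividend)
  moreover have "x < (i + 1) * Suc (x div (i + 1))"
  proof -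
    have "x = (i + 1) * (x div (i + 1)) + x mod (i + 1)" by (metis div_mult_mod_eq mult.commute)
    moreover have "x mod (i + 1) < i + 1" by simp
    moreover have "(i + 1) * Suc (x div (i + 1)) = (i + 1) * (x div (i + 1)) + (i + 1)" by simp
    ultimately show ?thesis by linarith
  qed
  ultimately show "x \<in> standard_block i k" using k unfolding standard_block_def
    by (auto simp: mult.commute)
qed

lemma block_partition_standard: "block_partition (standard_block i ` {0..q}) (Suc q) i"
proof -
  have blocks: "finite (standard_block i k)" "card (standard_block i k) = Suc i" for k
    by (simp_all add: standard_block_def algebra_simps)
  have "inj_on (standard_block i) {0..q}"
  proof (rule inj_onI)
    fix j k assume eq: "standard_block i j = standard_block i k"
    have "j * (i + 1) \<in> standard_block i j" by (simp add: standard_block_def)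
    moreover from this have "j * (i + 1) \<in> standard_block i k" using eq by simp
    ultimately show "j = k" by (simp add: mem_standard_block)
  qed
  then show ?thesis unfolding block_partition_def
    using card_image[of "standard_block i" "{0..q}"] blocks by (auto simp: mem_standard_block)
qed

lemma join_block_complex:
  assumes "B \<inter> \<Union>Q = {}"
  shows "join (bd_simplex B) (block_complex Q) = block_complex (insert B Q)"
proof
  show "join (bd_simplex B) (block_complex Q) \<subseteq> block_complex (insert B Q)"
  proof
    fix X assume "X \<in> join (bd_simplex B) (block_complex Q)"
    then obtain F G where X: "X = F \<union> G" "F \<subset> B" "G \<subseteq> \<Union>Q" "\<forall>C\<in>Q. \<not> C \<subseteq> G"
      by (auto simp: join_def bd_simplex_def block_complex_def)
    have "\<not> C \<subseteq> X" if "C \<in> Q" for C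
      using that X assms by blast
    moreover have "\<not> B \<subseteq> X" using X assms by blast
    ultimately show "X \<in> block_complex (insert B Q)" using X by (auto simp: block_complex_def)
  qed
next
  show "block_complex (insert B Q) \<subseteq> join (bd_simplex B) (block_complex Q)"
  proof
    fix X assume X: "X \<in> block_complex (insert B Q)"
    have "X \<inter> B \<in> bd_simplex B" using X by (auto simp: block_complex_def bd_simplex_def)
    moreover have "X - B \<in> block_complex Q" using X by (auto simp: block_complex_def)
    moreover have "X = (X \<inter> B) \<union> (X - B)" by blast
    ultimately show "X \<in> join (bd_simplex B) (block_complex Q)" unfolding join_def by blast
  qed
qed

lemma foldr_join_standard_blocks:
  "p \<le> q \<Longrightarrow> foldr join (map (\<lambda>k. bd_simplex (standard_block i k)) [0..<p])
     (block_complex (standard_block i ` {p..q})) = block_complex (standard_block i ` {0..q})"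
proof (induction p)
  case 0
  then show ?case by simp
next
  case (Suc p)
  have disj: "standard_block i p \<inter> \<Union>(standard_block i ` {Suc p..q}) = {}"
    by (auto simp: mem_standard_block)
  have "standard_block i ` {p..q} = insert (standard_block i p) (standard_block i ` {Suc p..q})"
    using Suc.prems by (simp add: atLeastAtMost_insertL[symmetric])
  then show ?case using Suc join_block_complex[OF disj] by simp
qed

text \<open>If i divides d+1 then d+1 = (q+1)i with q = d div i, and the last factor of S(i,d)
  is again the boundary of an i-simplex.\<close>
lemma dvd_Suc_div:
  assumes "0 < i" and "i dvd d + 1"
  shows "d mod i = i - 1" and "d + 1 = Suc (d div i) * i"
proof -
  have "Suc d mod i = 0" using assms(2) by simp
  then have "Suc (d mod i) = i" by (simp add: mod_Suc split: if_splits)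
  then show mod: "d mod i = i - 1" by simp
  have "d = d div i * i + (i - 1)" using div_mult_mod_eq[of d i] mod by simp
  then show "d + 1 = Suc (d div i) * i" using assms(1) by simp
qed

lemma S_complex_block_complex:
  assumes "0 < i" and "i dvd d + 1"
  shows "S_complex i d = block_complex (standard_block i ` {0..d div i})"
proof -
  let ?q = "d div i"
  have last: "{?q * (i + 1) ..< ?q * (i + 1) + (d mod i + 1) + 1} = standard_block i ?q"
    using assms dvd_Suc_div(1)[OF assms] by (simp add: standard_block_def algebra_simps)
  have "bd_simplex (standard_block i ?q) = block_complex (standard_block i ` {?q..?q})"
    by (auto simp: bd_simplex_def block_complex_def)
  then show ?thesis
    unfolding S_complex_def Let_def last standard_block_def[symmetric]
    using foldr_join_standard_blocks[of ?q ?q i] by simp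
qed

text \<open>A complex in C(i,d) with the f-vector of S(i,d) is admissible with n = d div i + 1
  (the f-vector is only needed for the number of vertices); hence it is a block complex,
  and so isomorphic to S(i,d).\<close>
theorem theorem1p1:
  fixes \<Delta> :: "'a::linorder set set" and i d :: nat
  assumes "0 < i" and "i \<le> d + 1" and "i dvd d + 1"
    and "\<Delta> \<in> C_class i d"
    and "\<forall>j. fvec j \<Delta> = fvec j (S_complex i d)"
  shows "isomorphic \<Delta> (S_complex i d)"
proof -
  let ?n = "Suc (d div i)" and ?P0 = "standard_block i ` {0..d div i}"
  have n: "d + 1 = ?n * i" using dvd_Suc_div(2)[OF assms(1,3)] .
  have S: "S_complex i d = block_complex ?P0" by (rule S_complex_block_complex[OF assms(1,3)])
  have P0: "block_partition ?P0 ?n i" by (rule block_partition_standard)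
  have sc: "simplicial_complex \<Delta>" and dim: "has_dim \<Delta> d"
    and hom: "top_reduced_homology_nonzero \<Delta> d" and mf: "\<forall>F. missing_face \<Delta> F \<longrightarrow> card F - 1 \<le> i"
    using assms(4) by (auto simp: C_class_def)
  obtain c where c: "chain \<Delta> d c" "\<exists>F. c F \<noteq> 0" "\<forall>G\<in>\<Delta>. card G = d \<longrightarrow> boundary \<Delta> d c G = 0"
    using hom unfolding top_reduced_homology_nonzero_def by blast
  have dc: "down_closed \<Delta>" using sc by (rule down_closed_simplicial_complex)
  have "card (\<Union>\<Delta>) = card (\<Union>(block_complex ?P0))"
    using fvec_0_vertices[OF dc] fvec_0_vertices[OF down_closed_block_complex] assms(5) S by metis
  also have "\<dots> = ?n * Suc i"
    using vertices_block_complex[OF P0 assms(1)] block_partition_card(1)[OF P0] by simp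
  finally have "admissible \<Delta> {F. c F \<noteq> 0} i ?n"
    using sc dim dc small_nonfaces_of_missing_faces[OF mf] pseudocycle_cycle_support[OF sc c(1,3,2)]
      c(1) n by (auto simp: admissible_def simplicial_complex_def has_dim_def chain_def)
  then obtain P where P: "block_partition P ?n i" "\<Delta> = block_complex P"
    using admissible_block_complex[OF assms(1)] by blast
  show ?thesis using isomorphic_block_complexes[OF P(1) P0 assms(1)] P(2) S by simp
qed

end
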